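(* Let $n\ge5$ and let $G$ be the bipyramid graph on $[n]$. Then $$\Big|\sum_{s=3}^{n}(-1)^{s-3}(s-3)!\,\pi_G(s)\Big|=n-4.$$
   Context: Bipyramid graph. For $n\ge5$, the bipyramid graph $G$ on $[n]$ consists of the edges of the $(n-2)$-cycle $3,4,\dots,n,3$ together with the edges $\{1,j\}$ and $\{2,j\}$ for $j=3,\dots,n$. Independent partitions. $\pi_G(s)$ denotes the number of set partitions of $[n]$ into exactly $s$ nonempty blocks, each of which is an independent set of $G$, i.e. contains no edge of $G$. (The paper uses this identity to conclude that, assuming its conjectured formula $\mu(G)=\big|\sum_{s=3}^n(-1)^{s-3}(s-3)!\,\pi_G(s)\big|$ for copious graphs, the ML degree of the bipyramid is $n-4$.) *)

theory Defs
  imports Main "HOL-Library.Disjoint_Sets"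
begin

definition bipyramid_edges :: "nat \<Rightarrow> nat set set" where
  "bipyramid_edges n =
     {{j, j + 1} | j. 3 \<le> j \<and> j < n} \<union> {{n, 3}}
     \<union> {{1, j} | j. 3 \<le> j \<and> j \<le> n}
     \<union> {{2, j} | j. 3 \<le> j \<and> j \<le> n}"

definition independent_set :: "'a set set \<Rightarrow> 'a set \<Rightarrow> bool" where
  "independent_set E B \<longleftrightarrow> (\<forall>e\<in>E. \<not> e \<subseteq> B)"

definition indep_partition_count :: "'a set \<Rightarrow> 'a set set \<Rightarrow> nat \<Rightarrow> nat" where
  "indep_partition_count V E s =
     card {P. partition_on V P \<and> card P = s \<and> (\<forall>B\<in>P. independent_set E B)}"

end

theory Submission
  imports Defs
begin

text \<open>Vertices 1 and 2 are adjacent to every vertex of the cycle on \<open>{3..n}\<close> but not to each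
  other, so the independent partitions of the bipyramid arise from those of the cycle by adding
  either the blocks \<open>{1}\<close> and \<open>{2}\<close> or the block \<open>{1, 2}\<close>. With \<open>w s = (-1)^(s-3) (s-3)!\<close>
  the sum becomes the sum of \<open>w (|P| + 2) + w (|P| + 1) = (-1)^|P| ((|P| - 2)! - (|P| - 1)!)\<close> over
  the independent partitions \<open>P\<close> of the cycle. Both parts are evaluated by growing a path one
  vertex at a time while recording whether its two ends lie in one block (the independent
  partitions of the cycle are those of the path with its ends apart): the new vertex is a
  singleton or joins a block avoiding its neighbour, which gives a linear recursion with
  solutions \<open>(-1)^n\<close> and \<open>(-1)^n (n - 3)\<close>. Hence the sum is \<open>(-1)^n (4 - n)\<close>.\<close>

section \<open>Partitions\<close>

lemma partition_on_block_eq: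
  assumes "partition_on A P" "B1 \<in> P" "B2 \<in> P" "x \<in> B1" "x \<in> B2"
  shows "B1 = B2"
  using assms unfolding partition_on_def disjoint_def by blast

lemma partition_on_block_subset: "partition_on A P \<Longrightarrow> B \<in> P \<Longrightarrow> B \<subseteq> A"
  unfolding partition_on_def by blast

lemma partition_on_singleton_iff: "partition_on {x} P \<longleftrightarrow> P = {{x}}"
proof
  assume P: "partition_on {x} P"
  then have "B = {x}" if "B \<in> P" for B
    using partition_on_block_subset[OF P that] partition_onD3[OF P] that
    by (metis subset_singleton_iff)
  moreover have "P \<noteq> {}" using partition_onD1[OF P] by blast
  ultimately show "P = {{x}}" by blast
qed (simp add: partition_on_space)

lemma card_partition_on_le:
  assumes P: "partition_on A P" and fin: "finite A"
  shows "card P \<le> card A"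
proof -
  define f where "f B = (SOME x. x \<in> B)" for B :: "'a set"
  have fB: "f B \<in> B" if "B \<in> P" for B
    using partition_onD3[OF P] that unfolding f_def by (metis all_not_in_conv someI_ex)
  have "inj_on f P"
    by (rule inj_onI) (metis fB partition_on_block_eq[OF P])
  moreover have "f ` P \<subseteq> A" using fB partition_on_block_subset[OF P] by blast
  ultimately show ?thesis using card_inj_on_le fin by blast
qed

definition in_same_block :: "'a set set \<Rightarrow> 'a \<Rightarrow> 'a \<Rightarrow> bool" where
  "in_same_block P x y \<longleftrightarrow> (\<exists>B\<in>P. x \<in> B \<and> y \<in> B)"

lemma card_partition_on_ge_2:
  assumes P: "partition_on A P" and fin: "finite A" and "x \<in> A" "y \<in> A"
    and apart: "\<not> in_same_block P x y"
  shows "2 \<le> card P"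
proof -
  obtain Bx By where "Bx \<in> P" "x \<in> Bx" "By \<in> P" "y \<in> By"
    using partition_onD1[OF P] \<open>x \<in> A\<close> \<open>y \<in> A\<close> by blast
  with apart have "Bx \<noteq> By" "{Bx, By} \<subseteq> P" unfolding in_same_block_def by blast+
  then have "card {Bx, By} \<le> card P" using finite_elements[OF fin P] by (intro card_mono) auto
  with \<open>Bx \<noteq> By\<close> show ?thesis by simp
qed

lemma card_blocks_two_points:
  assumes P: "partition_on V P" and fin: "finite V" and "x \<in> V" "y \<in> V"
  shows "card {B\<in>P. x \<in> B \<and> y \<notin> B} = (if in_same_block P x y then 0 else 1)"
    and "int (card {B\<in>P. x \<notin> B \<and> y \<notin> B}) = int (card P) - (if in_same_block P x y then 1 else 2)"
proof -
  have fP: "finite P" using finite_elements[OF fin P] .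
  obtain Bx By where B: "Bx \<in> P" "x \<in> Bx" "By \<in> P" "y \<in> By"
    using partition_onD1[OF P] \<open>x \<in> V\<close> \<open>y \<in> V\<close> by blast
  have unique: "C = Bx" if "C \<in> P" "x \<in> C" for C
    using partition_on_block_eq[OF P that(1) B(1) that(2) B(2)] .
  have unique': "C = By" if "C \<in> P" "y \<in> C" for C
    using partition_on_block_eq[OF P that(1) B(3) that(2) B(4)] .
  have same: "in_same_block P x y \<longleftrightarrow> Bx = By"
    unfolding in_same_block_def using B unique unique' by blast
  have "{B\<in>P. x \<in> B \<and> y \<notin> B} = (if Bx = By then {} else {Bx})"
  proof (cases "Bx = By")
    case True
    have "{B\<in>P. x \<in> B \<and> y \<notin> B} = {}" using B unique True by blast
    then show ?thesis using True by simp
  next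
    case False
    then have "y \<notin> Bx" using unique'[OF B(1)] by blast
    then have "{B\<in>P. x \<in> B \<and> y \<notin> B} = {Bx}" using B(1,2) unique by blast
    then show ?thesis using False by simp
  qed
  then show "card {B\<in>P. x \<in> B \<and> y \<notin> B} = (if in_same_block P x y then 0 else 1)"
    unfolding same by simp
  have "{B\<in>P. x \<notin> B \<and> y \<notin> B} = P - {Bx, By}"
    using B unique unique' by blast
  moreover have sub: "{Bx, By} \<subseteq> P" using B by blast
  then have "card (P - {Bx, By}) = card P - card {Bx, By}" by (simp add: card_Diff_subset)
  moreover have "card {Bx, By} \<le> card P" using card_mono[OF fP sub] .
  ultimately show "int (card {B\<in>P. x \<notin> B \<and> y \<notin> B}) = int (card P) - (if in_same_block P x y then 1 else 2)"
    unfolding same by (cases "Bx = By") auto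
qed

lemma sum_blocks_avoiding:
  fixes c d :: int
  assumes "partition_on V P" "finite V" "x \<in> V" "y \<in> V"
  shows "(\<Sum>B\<in>{B\<in>P. y \<notin> B}. if x \<in> B then c else d)
       = (if in_same_block P x y then (int (card P) - 1) * d else c + (int (card P) - 2) * d)"
proof -
  have fin: "finite {B\<in>P. y \<notin> B}" using finite_elements[OF assms(2,1)] by simp
  have "{B\<in>P. y \<notin> B} \<inter> {B. x \<in> B} = {B\<in>P. x \<in> B \<and> y \<notin> B}"
    "{B\<in>P. y \<notin> B} \<inter> - {B. x \<in> B} = {B\<in>P. x \<notin> B \<and> y \<notin> B}" by auto
  then have "(\<Sum>B\<in>{B\<in>P. y \<notin> B}. if x \<in> B then c else d)
      = int (card {B\<in>P. x \<in> B \<and> y \<notin> B}) * c + int (card {B\<in>P. x \<notin> B \<and> y \<notin> B}) * d"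
    unfolding sum.If_cases[OF fin] by simp
  then show ?thesis unfolding card_blocks_two_points[OF assms]
    by (cases "in_same_block P x y") simp_all
qed

lemma sum_partition_on_filter:
  assumes "finite V"
  shows "(\<Sum>P | partition_on V P \<and> R P. h P) = (\<Sum>P | partition_on V P. if R P then h P else 0)"
  using sum.inter_filter[OF finitely_many_partition_on[OF assms], of h R] by simp

section \<open>Adding a point to a partition\<close>

lemma image_Diff_singleton_eq_self:
  assumes "\<forall>B\<in>P. v \<notin> B"
  shows "(\<lambda>B. B - {v}) ` P = P"
proof -
  have "(\<lambda>B. B - {v}) ` P = (\<lambda>B. B) ` P" by (rule image_cong) (use assms in auto)
  then show ?thesis by simp
qed

definition add_to_block :: "'a \<Rightarrow> 'a set set \<Rightarrow> 'a set \<Rightarrow> 'a set set" where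
  "add_to_block v P B = insert (insert v B) (P - {B})"

definition delete_point :: "'a \<Rightarrow> 'a set set \<Rightarrow> 'a set set" where
  "delete_point v Q = (\<lambda>B. B - {v}) ` Q - {{}}"

lemma partition_on_insert_singleton:
  assumes P: "partition_on V P" and v: "v \<notin> V"
  shows "partition_on (insert v V) (insert {v} P)"
proof -
  have "disjnt {v} (\<Union>P)" using partition_onD1[OF P] v by (simp add: disjnt_def)
  moreover have "insert v V - {v} = V" using v by blast
  ultimately show ?thesis using partition_on_insert[of "{v}" P "insert v V"] P by simp
qed

lemma partition_on_add_to_block:
  assumes P: "partition_on V P" and v: "v \<notin> V" and B: "B \<in> P"
  shows "partition_on (insert v V) (add_to_block v P B)"
proof -
  have PB: "P = insert B (P - {B})" using B by blast
  have disj: "disjnt B (\<Union>(P - {B}))"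
    using partition_onD2[OF P] B by (auto simp: disjoint_def disjnt_def)
  then have "partition_on (V - B) (P - {B})"
    using P PB partition_on_insert[of B "P - {B}" V] by simp
  moreover have "insert v V - insert v B = V - B" using v by blast
  moreover have "disjnt (insert v B) (\<Union>(P - {B}))"
    using disj partition_onD1[OF P] v by (auto simp: disjnt_def)
  moreover have "insert v B \<subseteq> insert v V" using partition_on_block_subset[OF P B] by blast
  ultimately show ?thesis
    unfolding add_to_block_def by (subst partition_on_insert) auto
qed

lemma partition_on_delete_point:
  assumes Q: "partition_on (insert v V) Q" and v: "v \<notin> V"
  shows "partition_on V (delete_point v Q)"
proof -
  have "partition_on ((\<lambda>B. B - {v}) (insert v V)) ((\<lambda>B. B - {v}) ` Q - {{}})"
    by (rule partition_on_transform[OF Q]) (auto simp: disjnt_def)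
  then show ?thesis unfolding delete_point_def using v by simp
qed

lemma delete_point_insert_singleton:
  assumes P: "partition_on V P" and v: "v \<notin> V"
  shows "delete_point v (insert {v} P) = P"
proof -
  have "(\<lambda>B. B - {v}) ` P = P"
    using partition_on_block_subset[OF P] v by (intro image_Diff_singleton_eq_self) blast
  then show ?thesis unfolding delete_point_def using partition_onD3[OF P] by auto
qed

lemma delete_point_add_to_block:
  assumes P: "partition_on V P" and v: "v \<notin> V" and B: "B \<in> P"
  shows "delete_point v (add_to_block v P B) = P"
proof -
  have "(\<lambda>C. C - {v}) ` (P - {B}) = P - {B}"
    using partition_on_block_subset[OF P] v by (intro image_Diff_singleton_eq_self) blast
  moreover have "insert v B - {v} = B" using partition_on_block_subset[OF P B] v by blast
  ultimately have "(\<lambda>C. C - {v}) ` add_to_block v P B = P"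
    unfolding add_to_block_def using B by auto
  then show ?thesis unfolding delete_point_def using partition_onD3[OF P] by auto
qed

definition point_extensions :: "'a \<Rightarrow> 'a set set \<Rightarrow> 'a set set set" where
  "point_extensions v P = insert (insert {v} P) (add_to_block v P ` P)"

lemma in_point_extensions_delete_point:
  assumes Q: "partition_on (insert v V) Q" and v: "v \<notin> V"
  shows "Q \<in> point_extensions v (delete_point v Q)"
proof -
  obtain Bv where Bv: "Bv \<in> Q" "v \<in> Bv"
    using partition_onD1[OF Q] by blast
  have others: "\<forall>C\<in>Q - {Bv}. v \<notin> C"
    using partition_on_block_eq[OF Q _ Bv(1) _ Bv(2)] by blast
  have Qeq: "Q = insert Bv (Q - {Bv})" using Bv by blast
  have "{} \<notin> Q - {Bv}" using partition_onD3[OF Q] by blast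
  then have D: "delete_point v Q = insert (Bv - {v}) (Q - {Bv}) - {{}}"
    unfolding delete_point_def
    by (subst Qeq) (simp only: image_insert image_Diff_singleton_eq_self[OF others])
  show ?thesis
  proof (cases "Bv = {v}")
    case True
    then have "delete_point v Q = Q - {Bv}" using D partition_onD3[OF Q] by auto
    then have "Q = insert {v} (delete_point v Q)" using True Bv by blast
    then show ?thesis unfolding point_extensions_def by (metis insertI1)
  next
    case False
    define B where "B = Bv - {v}"
    have "B \<noteq> {}" using False Bv(2) unfolding B_def by blast
    then have D': "delete_point v Q = insert B (Q - {Bv})"
      using D partition_onD3[OF Q] unfolding B_def by blast
    have "B \<notin> Q - {Bv}"
    proof
      assume "B \<in> Q - {Bv}"
      moreover obtain x where "x \<in> B" using \<open>B \<noteq> {}\<close> by blast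
      ultimately show False
        using partition_on_block_eq[OF Q _ Bv(1), of B x] unfolding B_def by blast
    qed
    then have "add_to_block v (delete_point v Q) B = insert (insert v B) (Q - {Bv})"
      unfolding add_to_block_def D' by (simp add: insert_Diff_if)
    also have "insert v B = Bv" unfolding B_def using Bv by blast
    finally have "Q = add_to_block v (delete_point v Q) B" using Qeq by simp
    moreover have "B \<in> delete_point v Q" using D' by blast
    ultimately show ?thesis unfolding point_extensions_def by (metis image_eqI insertI2)
  qed
qed

lemma insert_singleton_notin_add_to_block:
  assumes P: "partition_on V P" and v: "v \<notin> V"
  shows "insert {v} P \<notin> add_to_block v P ` P"
proof
  assume "insert {v} P \<in> add_to_block v P ` P"
  then obtain B where B: "B \<in> P" "{v} \<in> add_to_block v P B" by auto
  then have "{v} = insert v B \<or> {v} \<in> P" unfolding add_to_block_def by blast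
  moreover have "B \<noteq> {}" "B \<subseteq> V"
    using B(1) partition_onD3[OF P] partition_on_block_subset[OF P] by auto
  ultimately show False
    using partition_on_block_subset[OF P, of "{v}"] v by blast
qed

lemma inj_on_add_to_block:
  assumes P: "partition_on V P" and v: "v \<notin> V"
  shows "inj_on (add_to_block v P) P"
proof
  fix B1 B2 assume B: "B1 \<in> P" "B2 \<in> P" "add_to_block v P B1 = add_to_block v P B2"
  have vnot: "\<forall>C\<in>P. v \<notin> C" using partition_on_block_subset[OF P] v by blast
  have "insert v B1 \<in> add_to_block v P B2" using B unfolding add_to_block_def by blast
  then have "insert v B1 = insert v B2" using vnot unfolding add_to_block_def by blast
  then show "B1 = B2" using vnot B by (metis insert_ident)
qed

lemma partitions_insert_eq_UN_point_extensions:
  assumes v: "v \<notin> V"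
  shows "{Q. partition_on (insert v V) Q} = (\<Union>P\<in>{P. partition_on V P}. point_extensions v P)"
proof (intro equalityI subsetI)
  fix Q assume "Q \<in> {Q. partition_on (insert v V) Q}"
  then have Q: "partition_on (insert v V) Q" by simp
  with partition_on_delete_point[OF Q v] in_point_extensions_delete_point[OF Q v]
  show "Q \<in> (\<Union>P\<in>{P. partition_on V P}. point_extensions v P)" by blast
next
  fix Q assume "Q \<in> (\<Union>P\<in>{P. partition_on V P}. point_extensions v P)"
  then obtain P where P: "partition_on V P" and "Q \<in> point_extensions v P" by blast
  then show "Q \<in> {Q. partition_on (insert v V) Q}"
    unfolding point_extensions_def
    using partition_on_insert_singleton[OF P v] partition_on_add_to_block[OF P v] by auto
qed

lemma delete_point_point_extensions:
  assumes "partition_on V P" "v \<notin> V" "Q \<in> point_extensions v P"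
  shows "delete_point v Q = P"
  using assms delete_point_insert_singleton delete_point_add_to_block
  unfolding point_extensions_def by fastforce

lemma sum_point_extensions:
  assumes P: "partition_on V P" and fin: "finite V" and v: "v \<notin> V"
  shows "sum f (point_extensions v P) = f (insert {v} P) + (\<Sum>B\<in>P. f (add_to_block v P B))"
  unfolding point_extensions_def
  using finite_elements[OF fin P] insert_singleton_notin_add_to_block[OF P v]
  by (simp add: sum.reindex[OF inj_on_add_to_block[OF P v]])

theorem sum_partition_on_insert:
  fixes f :: "'a set set \<Rightarrow> 'b::comm_monoid_add"
  assumes fin: "finite V" and v: "v \<notin> V"
  shows "(\<Sum>Q | partition_on (insert v V) Q. f Q)
       = (\<Sum>P | partition_on V P. f (insert {v} P) + (\<Sum>B\<in>P. f (add_to_block v P B)))"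
proof -
  have "(\<Sum>Q | partition_on (insert v V) Q. f Q)
      = sum f (\<Union>P\<in>{P. partition_on V P}. point_extensions v P)"
    unfolding partitions_insert_eq_UN_point_extensions[OF v] ..
  also have "\<dots> = (\<Sum>P | partition_on V P. sum f (point_extensions v P))"
  proof (rule sum.UNION_disjoint)
    show "finite {P. partition_on V P}" by (rule finitely_many_partition_on[OF fin])
    show "\<forall>P\<in>{P. partition_on V P}. finite (point_extensions v P)"
      using finite_elements[OF fin] by (simp add: point_extensions_def)
    show "\<forall>P1\<in>{P. partition_on V P}. \<forall>P2\<in>{P. partition_on V P}.
        P1 \<noteq> P2 \<longrightarrow> point_extensions v P1 \<inter> point_extensions v P2 = {}"
      using delete_point_point_extensions[OF _ v] by blast
  qed
  also have "\<dots> = (\<Sum>P | partition_on V P. f (insert {v} P) + (\<Sum>B\<in>P. f (add_to_block v P B)))"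
    using sum_point_extensions[OF _ fin v] by (intro sum.cong) auto
  finally show ?thesis .
qed

lemma card_insert_singleton_partition:
  assumes P: "partition_on V P" and fin: "finite V" and v: "v \<notin> V"
  shows "card (insert {v} P) = Suc (card P)"
proof -
  have "{v} \<notin> P" using partition_on_block_subset[OF P, of "{v}"] v by blast
  then show ?thesis using finite_elements[OF fin P] by simp
qed

lemma card_add_to_block:
  assumes P: "partition_on V P" and fin: "finite V" and v: "v \<notin> V" and B: "B \<in> P"
  shows "card (add_to_block v P B) = card P"
proof -
  have fP: "finite P" using finite_elements[OF fin P] .
  have "insert v B \<notin> P - {B}" using partition_on_block_subset[OF P, of "insert v B"] v by blast
  then have "card (add_to_block v P B) = Suc (card (P - {B}))"
    unfolding add_to_block_def using fP by simp
  also have "\<dots> = card P" using card_Suc_Diff1[OF fP B] .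
  finally show ?thesis .
qed

lemma not_in_same_block_insert_singleton:
  assumes "partition_on V P" "v \<notin> V" "x \<noteq> v"
  shows "\<not> in_same_block (insert {v} P) x v"
  using assms partition_on_block_subset unfolding in_same_block_def by fastforce

lemma in_same_block_add_to_block:
  assumes P: "partition_on V P" and "v \<notin> V" "B \<in> P" "x \<noteq> v"
  shows "in_same_block (add_to_block v P B) x v \<longleftrightarrow> x \<in> B"
  using assms partition_on_block_subset[OF P] unfolding in_same_block_def add_to_block_def by blast

section \<open>Independent partitions\<close>

lemma sum_weighted_card_fibres:
  fixes f :: "'b \<Rightarrow> 'c::comm_semiring_1"
  assumes "finite X" "finite S" "\<kappa> ` X \<subseteq> S"
  shows "(\<Sum>s\<in>S. f s * of_nat (card {x\<in>X. \<kappa> x = s})) = (\<Sum>x\<in>X. f (\<kappa> x))"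
proof -
  have "(\<Sum>s\<in>S. f s * of_nat (card {x\<in>X. \<kappa> x = s})) = (\<Sum>s\<in>S. \<Sum>x | x \<in> X \<and> \<kappa> x = s. f (\<kappa> x))"
    by (rule sum.cong) (simp_all add: mult.commute)
  also have "\<dots> = (\<Sum>x\<in>X. f (\<kappa> x))"
    by (rule sum.group[OF assms])
  finally show ?thesis .
qed

definition indep_partitions :: "'a set set \<Rightarrow> 'a set \<Rightarrow> 'a set set set" where
  "indep_partitions E V = {P. partition_on V P \<and> (\<forall>B\<in>P. independent_set E B)}"

lemma indep_partition_count_eq:
  "indep_partition_count V E s = card {P \<in> indep_partitions E V. card P = s}"
  unfolding indep_partition_count_def indep_partitions_def by (rule arg_cong[where f=card]) blast

lemma finite_indep_partitions: "finite V \<Longrightarrow> finite (indep_partitions E V)"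
  unfolding indep_partitions_def
  by (rule finite_subset[OF _ finitely_many_partition_on]) auto

lemma independent_set_mono: "independent_set E B \<Longrightarrow> C \<subseteq> B \<Longrightarrow> independent_set E C"
  unfolding independent_set_def by blast

lemma card_indep_partition_ge_3:
  assumes R: "R \<in> indep_partitions E V" and fin: "finite V" and "x \<in> V" "y \<in> V" "z \<in> V"
    and adjacent: "\<not> independent_set E {x, y}" "\<not> independent_set E {x, z}" "\<not> independent_set E {y, z}"
  shows "3 \<le> card R"
proof -
  have part: "partition_on V R" and indep: "\<And>B. B \<in> R \<Longrightarrow> independent_set E B"
    using R unfolding indep_partitions_def by blast+
  obtain Bx By Bz where B: "Bx \<in> R" "x \<in> Bx" "By \<in> R" "y \<in> By" "Bz \<in> R" "z \<in> Bz"
    using partition_onD1[OF part] \<open>x \<in> V\<close> \<open>y \<in> V\<close> \<open>z \<in> V\<close> by blast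
  have "Bx \<noteq> By" "Bx \<noteq> Bz" "By \<noteq> Bz"
    using B adjacent indep independent_set_mono[of E _ "{_, _}"] by (metis empty_subsetI insert_subset)+
  then have "card {Bx, By, Bz} = 3" by simp
  moreover have "card {Bx, By, Bz} \<le> card R"
    using B finite_elements[OF fin part] by (intro card_mono) auto
  ultimately show ?thesis by simp
qed

lemma sum_indep_partitions_insert:
  fixes g :: "'a set set \<Rightarrow> 'b::comm_monoid_add"
  assumes fin: "finite V" and v: "v \<notin> V" and indep_v: "independent_set E {v}"
  shows "(\<Sum>R\<in>indep_partitions E (insert v V). g R)
       = (\<Sum>Q\<in>indep_partitions E V. g (insert {v} Q)
            + (\<Sum>B | B \<in> Q \<and> independent_set E (insert v B). g (add_to_block v Q B)))"
proof -
  let ?indep = "\<lambda>R. \<forall>C\<in>R. independent_set E C"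
  define F where "F R = (if ?indep R then g R else 0)" for R
  have per_partition: "F (insert {v} Q) + (\<Sum>B\<in>Q. F (add_to_block v Q B))
      = (if ?indep Q then g (insert {v} Q)
           + (\<Sum>B | B \<in> Q \<and> independent_set E (insert v B). g (add_to_block v Q B)) else 0)"
    if Q: "partition_on V Q" for Q
  proof -
    have fQ: "finite Q" using finite_elements[OF fin Q] .
    have single: "?indep (insert {v} Q) \<longleftrightarrow> ?indep Q" using indep_v by blast
    have added: "?indep (add_to_block v Q B) \<longleftrightarrow> independent_set E (insert v B) \<and> ?indep Q"
      if "B \<in> Q" for B
      using that independent_set_mono[of E "insert v B" B] unfolding add_to_block_def by blast
    show ?thesis
    proof (cases "?indep Q")
      case True
      have "(\<Sum>B\<in>Q. F (add_to_block v Q B))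
          = (\<Sum>B\<in>Q. if independent_set E (insert v B) then g (add_to_block v Q B) else 0)"
        using True added by (intro sum.cong) (auto simp: F_def)
      also have "\<dots> = (\<Sum>B | B \<in> Q \<and> independent_set E (insert v B). g (add_to_block v Q B))"
        by (rule sum.inter_filter[OF fQ, symmetric])
      finally show ?thesis using True single by (simp add: F_def)
    next
      case False
      have "F (insert {v} Q) = 0" using False single unfolding F_def by auto
      moreover have "(\<Sum>B\<in>Q. F (add_to_block v Q B)) = 0"
        using False added unfolding F_def by (intro sum.neutral) auto
      ultimately show ?thesis using False by auto
    qed
  qed
  have "(\<Sum>R\<in>indep_partitions E (insert v V). g R) = (\<Sum>R | partition_on (insert v V) R. F R)"
    unfolding indep_partitions_def F_def using fin by (simp add: sum_partition_on_filter)
  also have "\<dots> = (\<Sum>Q | partition_on V Q. F (insert {v} Q) + (\<Sum>B\<in>Q. F (add_to_block v Q B)))"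
    by (rule sum_partition_on_insert[OF fin v])
  also have "\<dots> = (\<Sum>Q\<in>indep_partitions E V. g (insert {v} Q)
            + (\<Sum>B | B \<in> Q \<and> independent_set E (insert v B). g (add_to_block v Q B)))"
    unfolding indep_partitions_def sum_partition_on_filter[OF fin] by (rule sum.cong) (simp_all add: per_partition)
  finally show ?thesis .
qed

lemma not_independent_set_insert_block:
  assumes P: "partition_on V P" and B: "B \<in> P" and adjacent: "\<forall>x\<in>V. \<not> independent_set E {u, x}"
  shows "\<not> independent_set E (insert u B)"
proof -
  obtain x where "x \<in> B" using partition_onD3[OF P] B by fastforce
  moreover have "x \<in> V" using partition_on_block_subset[OF P B] \<open>x \<in> B\<close> by blast
  ultimately show ?thesis
    using adjacent independent_set_mono[of E "insert u B" "{u, x}"] by blast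
qed

text \<open>In a suspension, the two apexes \<open>v\<close>, \<open>w\<close> are adjacent to every vertex of \<open>V\<close>, so they
  are either singletons or form the block \<open>{v, w}\<close>.\<close>
lemma sum_indep_partitions_suspension:
  fixes f :: "nat \<Rightarrow> 'b::comm_monoid_add"
  assumes fin: "finite V" and "v \<notin> V" "w \<notin> V" "v \<noteq> w"
    and indep_vw: "independent_set E {v, w}"
    and adjacent: "\<And>x. x \<in> V \<Longrightarrow> \<not> independent_set E {v, x} \<and> \<not> independent_set E {w, x}"
  shows "(\<Sum>R\<in>indep_partitions E (insert v (insert w V)). f (card R))
       = (\<Sum>P\<in>indep_partitions E V. f (card P + 2) + f (card P + 1))"
proof -
  have indep_v: "independent_set E {v}" and indep_w: "independent_set E {w}"
    using independent_set_mono[OF indep_vw] by auto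
  have no_join: "\<not> independent_set E (insert u B)"
    if "u = v \<or> u = w" "B \<in> P" "partition_on V P" for u B P
    using not_independent_set_insert_block[OF that(3,2)] adjacent that(1) by blast
  define h where "h Q = f (card (insert {v} Q))
      + (\<Sum>B | B \<in> Q \<and> independent_set E (insert v B). f (card (add_to_block v Q B)))" for Q
  have h_suspension: "h (insert {w} P) = f (card P + 2) + f (card P + 1)"
    if P: "P \<in> indep_partitions E V" for P
  proof -
    have part: "partition_on V P" using P unfolding indep_partitions_def by blast
    have fP: "finite P" using finite_elements[OF fin part] .
    have w_notin: "{w} \<notin> P" using partition_on_block_subset[OF part, of "{w}"] \<open>w \<notin> V\<close> by blast
    have "{B. B \<in> insert {w} P \<and> independent_set E (insert v B)} = {{w}}"
      using no_join[OF _ _ part] indep_vw by (auto simp: insert_commute)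
    moreover have "add_to_block v (insert {w} P) {w} = insert {v, w} P"
      unfolding add_to_block_def using w_notin by auto
    moreover have "{v, w} \<notin> P" using partition_on_block_subset[OF part, of "{v, w}"] \<open>v \<notin> V\<close> by blast
    moreover have "{v} \<notin> insert {w} P"
      using partition_on_block_subset[OF part, of "{v}"] \<open>v \<notin> V\<close> \<open>v \<noteq> w\<close> by blast
    ultimately show ?thesis unfolding h_def using fP w_notin by simp
  qed
  have "(\<Sum>R\<in>indep_partitions E (insert v (insert w V)). f (card R))
      = (\<Sum>Q\<in>indep_partitions E (insert w V). h Q)"
    unfolding h_def using fin \<open>v \<notin> V\<close> \<open>v \<noteq> w\<close> indep_v by (intro sum_indep_partitions_insert) auto
  also have "\<dots> = (\<Sum>P\<in>indep_partitions E V. h (insert {w} P)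
      + (\<Sum>B | B \<in> P \<and> independent_set E (insert w B). h (add_to_block w P B)))"
    by (rule sum_indep_partitions_insert[OF fin \<open>w \<notin> V\<close> indep_w])
  also have "\<dots> = (\<Sum>P\<in>indep_partitions E V. f (card P + 2) + f (card P + 1))"
  proof (rule sum.cong[OF refl])
    fix P assume P: "P \<in> indep_partitions E V"
    then have no_block: "{B. B \<in> P \<and> independent_set E (insert w B)} = {}"
      using no_join unfolding indep_partitions_def by blast
    show "h (insert {w} P)
        + (\<Sum>B | B \<in> P \<and> independent_set E (insert w B). h (add_to_block w P B))
        = f (card P + 2) + f (card P + 1)"
      unfolding no_block h_suspension[OF P] by simp
  qed
  finally show ?thesis .
qed

section \<open>Independent partitions of paths and cycles\<close>

definition path_edges :: "nat set set" where
  "path_edges = range (\<lambda>i. {i, Suc i})"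

lemma independent_set_path_edges_iff: "independent_set path_edges B \<longleftrightarrow> (\<forall>i\<in>B. Suc i \<notin> B)"
  unfolding independent_set_def path_edges_def by auto

lemma independent_set_path_edges_insert:
  assumes "B \<subseteq> {a..j}"
  shows "independent_set path_edges (insert (Suc j) B) \<longleftrightarrow> independent_set path_edges B \<and> j \<notin> B"
  using assms unfolding independent_set_path_edges_iff by (auto; force)

lemma sum_indep_path_partitions_Suc:
  fixes g :: "nat set set \<Rightarrow> 'b::comm_monoid_add"
  assumes "a \<le> Suc j"
  shows "(\<Sum>R\<in>indep_partitions path_edges {a..Suc j}. g R)
       = (\<Sum>Q\<in>indep_partitions path_edges {a..j}. g (insert {Suc j} Q)
            + (\<Sum>B\<in>{B\<in>Q. j \<notin> B}. g (add_to_block (Suc j) Q B)))"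
proof -
  have interval: "{a..Suc j} = insert (Suc j) {a..j}" using assms by auto
  have "independent_set path_edges {Suc j}"
    unfolding independent_set_path_edges_iff by simp
  then have "(\<Sum>R\<in>indep_partitions path_edges (insert (Suc j) {a..j}). g R)
       = (\<Sum>Q\<in>indep_partitions path_edges {a..j}. g (insert {Suc j} Q)
            + (\<Sum>B | B \<in> Q \<and> independent_set path_edges (insert (Suc j) B). g (add_to_block (Suc j) Q B)))"
    by (intro sum_indep_partitions_insert) auto
  also have "\<dots> = (\<Sum>Q\<in>indep_partitions path_edges {a..j}. g (insert {Suc j} Q)
            + (\<Sum>B\<in>{B\<in>Q. j \<notin> B}. g (add_to_block (Suc j) Q B)))"
  proof (rule sum.cong[OF refl])
    fix Q assume Q: "Q \<in> indep_partitions path_edges {a..j}"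
    have "independent_set path_edges (insert (Suc j) B) \<longleftrightarrow> j \<notin> B" if "B \<in> Q" for B
      using Q that independent_set_path_edges_insert[OF partition_on_block_subset]
      unfolding indep_partitions_def by blast
    then have "{B. B \<in> Q \<and> independent_set path_edges (insert (Suc j) B)} = {B\<in>Q. j \<notin> B}"
      by blast
    then show "g (insert {Suc j} Q)
        + (\<Sum>B | B \<in> Q \<and> independent_set path_edges (insert (Suc j) B). g (add_to_block (Suc j) Q B))
        = g (insert {Suc j} Q) + (\<Sum>B\<in>{B\<in>Q. j \<notin> B}. g (add_to_block (Suc j) Q B))"
      by simp
  qed
  finally show ?thesis unfolding interval .
qed

definition ends_joined :: "nat \<Rightarrow> nat \<Rightarrow> nat set set set" where
  "ends_joined a j = {P \<in> indep_partitions path_edges {a..j}. in_same_block P a j}"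

text \<open>For \<open>a + 2 \<le> j\<close> these are the independent partitions of the cycle \<open>a, a + 1, \<dots>, j, a\<close>.\<close>
definition ends_apart :: "nat \<Rightarrow> nat \<Rightarrow> nat set set set" where
  "ends_apart a j = {P \<in> indep_partitions path_edges {a..j}. \<not> in_same_block P a j}"

lemma sum_indep_path_partitions_by_ends:
  "(\<Sum>P\<in>indep_partitions path_edges {a..j}. if in_same_block P a j then X P else Y P)
     = (\<Sum>P\<in>ends_joined a j. X P) + (\<Sum>P\<in>ends_apart a j. Y P)"
proof -
  have joined: "indep_partitions path_edges {a..j} \<inter> {P. in_same_block P a j} = ends_joined a j"
    and apart: "indep_partitions path_edges {a..j} \<inter> - {P. in_same_block P a j} = ends_apart a j"
    unfolding ends_joined_def ends_apart_def by auto
  have fin: "finite (indep_partitions path_edges {a..j})" by (rule finite_indep_partitions) simp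
  show ?thesis unfolding sum.If_cases[OF fin] joined apart by (rule refl)
qed

text \<open>The new vertex \<open>Suc j\<close> is a singleton or joins a block avoiding \<open>j\<close>; the ends stay
  joined exactly when that block contains \<open>a\<close>.\<close>
lemma sum_ends_Suc:
  fixes X Y :: "nat \<Rightarrow> int"
  assumes "a \<le> j"
  shows "(\<Sum>P\<in>ends_joined a (Suc j). X (card P)) + (\<Sum>P\<in>ends_apart a (Suc j). Y (card P))
       = (\<Sum>P\<in>ends_joined a j. Y (card P + 1) + (int (card P) - 1) * Y (card P))
       + (\<Sum>P\<in>ends_apart a j. Y (card P + 1) + X (card P) + (int (card P) - 2) * Y (card P))"
proof -
  define F where "F R = (if in_same_block R a (Suc j) then X (card R) else Y (card R))" for R
  have step: "F (insert {Suc j} Q) + (\<Sum>B\<in>{B\<in>Q. j \<notin> B}. F (add_to_block (Suc j) Q B))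
      = (if in_same_block Q a j then Y (card Q + 1) + (int (card Q) - 1) * Y (card Q)
         else Y (card Q + 1) + X (card Q) + (int (card Q) - 2) * Y (card Q))"
    if "Q \<in> indep_partitions path_edges {a..j}" for Q
  proof -
    have Q: "partition_on {a..j} Q" using that unfolding indep_partitions_def by blast
    have fin: "finite {a..j}" and new: "Suc j \<notin> {a..j}" and "a \<noteq> Suc j" using assms by auto
    have single: "F (insert {Suc j} Q) = Y (card Q + 1)"
      unfolding F_def using not_in_same_block_insert_singleton[OF Q new \<open>a \<noteq> Suc j\<close>]
        card_insert_singleton_partition[OF Q fin new] by simp
    have "(\<Sum>B\<in>{B\<in>Q. j \<notin> B}. F (add_to_block (Suc j) Q B))
        = (\<Sum>B\<in>{B\<in>Q. j \<notin> B}. if a \<in> B then X (card Q) else Y (card Q))"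
      unfolding F_def using in_same_block_add_to_block[OF Q new _ \<open>a \<noteq> Suc j\<close>]
        card_add_to_block[OF Q fin new] by (intro sum.cong) auto
    also have "\<dots> = (if in_same_block Q a j then (int (card Q) - 1) * Y (card Q)
        else X (card Q) + (int (card Q) - 2) * Y (card Q))"
      using assms by (intro sum_blocks_avoiding[OF Q fin]) auto
    finally show ?thesis unfolding single by (simp add: add.assoc)
  qed
  have "(\<Sum>P\<in>ends_joined a (Suc j). X (card P)) + (\<Sum>P\<in>ends_apart a (Suc j). Y (card P))
      = (\<Sum>R\<in>indep_partitions path_edges {a..Suc j}. F R)"
    unfolding F_def by (rule sum_indep_path_partitions_by_ends[symmetric])
  also have "\<dots> = (\<Sum>Q\<in>indep_partitions path_edges {a..j}. F (insert {Suc j} Q)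
      + (\<Sum>B\<in>{B\<in>Q. j \<notin> B}. F (add_to_block (Suc j) Q B)))"
    using assms by (intro sum_indep_path_partitions_Suc) simp
  also have "\<dots> = (\<Sum>Q\<in>indep_partitions path_edges {a..j}.
      if in_same_block Q a j then Y (card Q + 1) + (int (card Q) - 1) * Y (card Q)
      else Y (card Q + 1) + X (card Q) + (int (card Q) - 2) * Y (card Q))"
    by (rule sum.cong[OF refl]) (rule step)
  also have "\<dots> = (\<Sum>P\<in>ends_joined a j. Y (card P + 1) + (int (card P) - 1) * Y (card P))
       + (\<Sum>P\<in>ends_apart a j. Y (card P + 1) + X (card P) + (int (card P) - 2) * Y (card P))"
    by (rule sum_indep_path_partitions_by_ends)
  finally show ?thesis .
qed

lemma sum_ends_joined_Suc:
  fixes g :: "nat \<Rightarrow> int"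
  assumes "a \<le> j"
  shows "(\<Sum>P\<in>ends_joined a (Suc j). g (card P)) = (\<Sum>P\<in>ends_apart a j. g (card P))"
  using sum_ends_Suc[OF assms, of g "\<lambda>_. 0"] by simp

lemma sum_ends_apart_Suc:
  fixes g :: "nat \<Rightarrow> int"
  assumes "a \<le> j"
  shows "(\<Sum>P\<in>ends_apart a (Suc j). g (card P))
       = (\<Sum>P\<in>ends_joined a j. g (card P + 1) + (int (card P) - 1) * g (card P))
       + (\<Sum>P\<in>ends_apart a j. g (card P + 1) + (int (card P) - 2) * g (card P))"
  using sum_ends_Suc[OF assms, of "\<lambda>_. 0" g] by simp

lemma ends_joined_self: "ends_joined a a = {{{a}}}"
  and ends_apart_self: "ends_apart a a = {}"
  unfolding ends_joined_def ends_apart_def indep_partitions_def in_same_block_def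
    independent_set_path_edges_iff
  by (auto simp: partition_on_singleton_iff)

lemma card_ends_joined_ge_1: "P \<in> ends_joined a j \<Longrightarrow> 1 \<le> card P"
  unfolding ends_joined_def indep_partitions_def in_same_block_def
  using finite_elements[of "{a..j}" P] by (auto simp: Suc_le_eq card_gt_0_iff)

lemma card_ends_joined_ge_2:
  assumes "P \<in> ends_joined a j" "a < j"
  shows "2 \<le> card P"
proof (rule card_partition_on_ge_2[of "{a..j}" P "j - 1" j])
  have "independent_set path_edges B" if "B \<in> P" for B
    using assms(1) that unfolding ends_joined_def indep_partitions_def by blast
  moreover have "Suc (j - 1) = j" using assms(2) by simp
  ultimately show "\<not> in_same_block P (j - 1) j"
    unfolding in_same_block_def independent_set_path_edges_iff by metis
qed (use assms in \<open>auto simp: ends_joined_def indep_partitions_def\<close>)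

lemma card_ends_apart_ge_2: "P \<in> ends_apart a j \<Longrightarrow> a \<le> j \<Longrightarrow> 2 \<le> card P"
  unfolding ends_apart_def indep_partitions_def
  by (intro card_partition_on_ge_2[of "{a..j}" P a j]) auto

text \<open>Up to the sign \<open>(-1)^d\<close>, \<open>signed_fact d k\<close> is the value at \<open>x = d - 1\<close> of
  \<open>x (x - 1) \<cdots> (x - k + 1) / (x (x - 1) \<cdots> (x - d + 1))\<close>. Since the chromatic polynomial is the
  sum of \<open>x (x - 1) \<cdots> (x - |P| + 1)\<close> over the independent partitions \<open>P\<close>, the sums below are its
  derivatives at 0 (for \<open>d = 1\<close>) and at 1 (for \<open>d = 2\<close>).\<close>
definition signed_fact :: "nat \<Rightarrow> nat \<Rightarrow> int" where
  "signed_fact d k = (-1) ^ k * fact (k - d)"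

lemma signed_fact_Suc: "d \<le> k \<Longrightarrow> signed_fact d (Suc k) = - int (Suc k - d) * signed_fact d k"
  unfolding signed_fact_def by (simp add: Suc_diff_le of_nat_diff algebra_simps)

lemma sum_ends_apart_Suc_signed_fact:
  assumes "a \<le> j"
    and joined: "\<And>P. P \<in> ends_joined a j \<Longrightarrow> d \<le> card P"
    and apart: "\<And>P. P \<in> ends_apart a j \<Longrightarrow> d \<le> card P"
  shows "(\<Sum>P\<in>ends_apart a (Suc j). signed_fact d (card P))
       = (int d - 2) * (\<Sum>P\<in>ends_joined a j. signed_fact d (card P))
       + (int d - 3) * (\<Sum>P\<in>ends_apart a j. signed_fact d (card P))"
proof -
  have step: "signed_fact d (k + 1) + (int k - c) * signed_fact d k = (int d - 1 - c) * signed_fact d k"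
    if "d \<le> k" for k c
  proof -
    have "int (Suc k - d) = 1 + int k - int d" using that by simp
    then have "signed_fact d (k + 1) = (int d - 1 - int k) * signed_fact d k"
      using signed_fact_Suc[OF that] by (simp add: algebra_simps)
    then show ?thesis by (simp add: algebra_simps)
  qed
  show ?thesis
    unfolding sum_ends_apart_Suc[OF assms(1)] sum_distrib_left
    using step[of _ 1] step[of _ 2] joined apart
    by (intro arg_cong2[where f="(+)"] sum.cong) (auto simp: algebra_simps)
qed

lemma sum_ends_signed_fact_1:
  assumes "a \<le> j"
  shows "(\<Sum>P\<in>ends_apart a j. signed_fact 1 (card P)) = (-1) ^ Suc (j - a) * int (j - a)"
    and "(\<Sum>P\<in>ends_joined a j. signed_fact 1 (card P)) = (-1) ^ (j - a) * (int (j - a) - 1)"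
  using assms
proof (induction j rule: nat_induct_at_least)
  case base
  { case 1 show ?case by (simp add: ends_apart_self)
  next
    case 2 show ?case by (simp add: ends_joined_self signed_fact_def) }
next
  case (Suc j)
  define k where "k = j - a"
  have k: "Suc j - a = Suc k" using Suc.hyps unfolding k_def by simp
  note joined = Suc.IH(2)[folded k_def] and apart = Suc.IH(1)[folded k_def]
  { case 1
    have "(\<Sum>P\<in>ends_apart a (Suc j). signed_fact 1 (card P))
        = (int 1 - 2) * (\<Sum>P\<in>ends_joined a j. signed_fact 1 (card P))
        + (int 1 - 3) * (\<Sum>P\<in>ends_apart a j. signed_fact 1 (card P))"
      using card_ends_joined_ge_1 card_ends_apart_ge_2[OF _ Suc.hyps]
      by (intro sum_ends_apart_Suc_signed_fact[OF Suc.hyps]) force+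
    then show ?case unfolding k joined apart by (simp add: algebra_simps)
  next
    case 2
    show ?case unfolding k sum_ends_joined_Suc[OF Suc.hyps] apart by simp }
qed

lemma sum_ends_apart_signed_fact_2:
  assumes "a < j"
  shows "(\<Sum>P\<in>ends_apart a j. signed_fact 2 (card P)) = (-1) ^ Suc (j - a)"
proof -
  from assms have "Suc a \<le> j" by simp
  then show ?thesis
  proof (induction j rule: nat_induct_at_least)
    case base
    show ?case
      unfolding sum_ends_apart_Suc[OF order.refl] ends_joined_self ends_apart_self
      by (simp add: signed_fact_def)
  next
    case (Suc j)
    then have "Suc j - a = Suc (j - a)" by simp
    with Suc show ?case
      by (simp add: sum_ends_apart_Suc_signed_fact card_ends_joined_ge_2 card_ends_apart_ge_2)
  qed
qed

section \<open>The bipyramid\<close>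

lemma independent_set_bipyramid_iff:
  "independent_set (bipyramid_edges n) B \<longleftrightarrow>
     (\<forall>j. 3 \<le> j \<and> j < n \<longrightarrow> \<not> (j \<in> B \<and> Suc j \<in> B)) \<and> \<not> (n \<in> B \<and> 3 \<in> B)
     \<and> (\<forall>j. 3 \<le> j \<and> j \<le> n \<longrightarrow> \<not> (1 \<in> B \<and> j \<in> B))
     \<and> (\<forall>j. 3 \<le> j \<and> j \<le> n \<longrightarrow> \<not> (2 \<in> B \<and> j \<in> B))"
proof -
  have cycle: "(\<forall>e\<in>{{j, j + 1} | j. 3 \<le> j \<and> j < n}. \<not> e \<subseteq> B)
      \<longleftrightarrow> (\<forall>j. 3 \<le> j \<and> j < n \<longrightarrow> \<not> (j \<in> B \<and> Suc j \<in> B))"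
    by auto
  have spokes: "(\<forall>e\<in>{{v, j} | j. 3 \<le> j \<and> j \<le> n}. \<not> e \<subseteq> B)
      \<longleftrightarrow> (\<forall>j. 3 \<le> j \<and> j \<le> n \<longrightarrow> \<not> (v \<in> B \<and> j \<in> B))" for v :: nat
    by auto
  show ?thesis
    unfolding independent_set_def bipyramid_edges_def ball_Un cycle spokes by simp
qed

lemma independent_set_bipyramid_cycle:
  assumes "B \<subseteq> {3..n}"
  shows "independent_set (bipyramid_edges n) B \<longleftrightarrow> independent_set path_edges B \<and> \<not> (3 \<in> B \<and> n \<in> B)"
proof -
  have "1 \<notin> B" "2 \<notin> B" and "i \<in> B \<Longrightarrow> Suc i \<in> B \<Longrightarrow> 3 \<le> i \<and> i < n" for i
    using assms by auto
  then show ?thesis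
    unfolding independent_set_bipyramid_iff independent_set_path_edges_iff by blast
qed

lemma indep_partitions_bipyramid_cycle:
  "indep_partitions (bipyramid_edges n) {3..n} = ends_apart 3 n"
proof -
  have "(\<forall>B\<in>P. independent_set (bipyramid_edges n) B)
      \<longleftrightarrow> (\<forall>B\<in>P. independent_set path_edges B) \<and> \<not> in_same_block P 3 n"
    if "partition_on {3..n} P" for P
    using independent_set_bipyramid_cycle[OF partition_on_block_subset[OF that]]
    unfolding in_same_block_def by blast
  then show ?thesis unfolding ends_apart_def indep_partitions_def by blast
qed

lemma independent_set_bipyramid_apexes: "independent_set (bipyramid_edges n) {1, 2}"
  unfolding independent_set_bipyramid_iff by simp

lemma not_independent_set_bipyramid_spoke:
  assumes "x \<in> {3..n}" "v = 1 \<or> v = 2"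
  shows "\<not> independent_set (bipyramid_edges n) {v, x}"
  using assms unfolding independent_set_bipyramid_iff by auto

lemma sum_indep_partitions_bipyramid:
  fixes f :: "nat \<Rightarrow> 'b::comm_monoid_add"
  assumes "2 \<le> n"
  shows "(\<Sum>R\<in>indep_partitions (bipyramid_edges n) {1..n}. f (card R))
       = (\<Sum>P\<in>ends_apart 3 n. f (card P + 2) + f (card P + 1))"
proof -
  have "{1..n} = insert 1 (insert 2 {3..n})" using assms by auto
  then have "(\<Sum>R\<in>indep_partitions (bipyramid_edges n) {1..n}. f (card R))
      = (\<Sum>P\<in>indep_partitions (bipyramid_edges n) {3..n}. f (card P + 2) + f (card P + 1))"
    using not_independent_set_bipyramid_spoke
    by (simp only:) (rule sum_indep_partitions_suspension[OF _ _ _ _ independent_set_bipyramid_apexes], simp_all)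
  then show ?thesis unfolding indep_partitions_bipyramid_cycle .
qed

lemma card_indep_partitions_bipyramid:
  assumes "4 \<le> n"
  shows "card ` indep_partitions (bipyramid_edges n) {1..n} \<subseteq> {3..n}"
proof
  fix k assume "k \<in> card ` indep_partitions (bipyramid_edges n) {1..n}"
  then obtain R where R: "R \<in> indep_partitions (bipyramid_edges n) {1..n}" and k: "k = card R"
    by blast
  have "\<not> independent_set (bipyramid_edges n) {3, 4}"
    using assms unfolding independent_set_bipyramid_iff by auto
  then have "3 \<le> card R"
    using assms not_independent_set_bipyramid_spoke[of _ n 1]
    by (intro card_indep_partition_ge_3[OF R, of 1 3 4]) auto
  moreover have "card R \<le> n"
    using card_partition_on_le[of "{1..n}" R] R unfolding indep_partitions_def by simp
  ultimately show "k \<in> {3..n}" using k by simp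
qed

lemma signed_fact_2_minus_1:
  assumes "2 \<le> k"
  shows "signed_fact 2 k - signed_fact 1 k
       = (-1) ^ (k + 2 - 3) * int (fact (k + 2 - 3)) + (-1) ^ (k + 1 - 3) * int (fact (k + 1 - 3))"
proof -
  obtain m where "k = m + 2" using assms by (metis add.commute le_Suc_ex)
  then show ?thesis unfolding signed_fact_def by (simp add: algebra_simps)
qed

theorem mainTheorem17:
  fixes n :: nat
  assumes "n \<ge> 5"
  shows "\<bar>\<Sum>s = 3..n. (-1::int) ^ (s - 3) * int (fact (s - 3))
            * int (indep_partition_count {1..n} (bipyramid_edges n) s)\<bar> = int n - 4"
proof -
  let ?E = "bipyramid_edges n"
  define w :: "nat \<Rightarrow> int" where "w s = (-1) ^ (s - 3) * int (fact (s - 3))" for s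
  have "(\<Sum>s = 3..n. w s * int (indep_partition_count {1..n} ?E s))
      = (\<Sum>R\<in>indep_partitions ?E {1..n}. w (card R))"
    unfolding indep_partition_count_eq using assms
    by (intro sum_weighted_card_fibres finite_indep_partitions card_indep_partitions_bipyramid) auto
  also have "\<dots> = (\<Sum>P\<in>ends_apart 3 n. w (card P + 2) + w (card P + 1))"
    using assms by (intro sum_indep_partitions_bipyramid) simp
  also have "\<dots> = (\<Sum>P\<in>ends_apart 3 n. signed_fact 2 (card P) - signed_fact 1 (card P))"
    using assms card_ends_apart_ge_2 unfolding w_def
    by (intro sum.cong refl signed_fact_2_minus_1[symmetric]) simp
  also have "\<dots> = (-1) ^ Suc (n - 3) * (4 - int n)"
    using assms sum_ends_apart_signed_fact_2[of 3 n] sum_ends_signed_fact_1(1)[of 3 n]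
    by (simp add: sum_subtractf algebra_simps of_nat_diff)
  finally show ?thesis using assms by (simp add: w_def abs_mult power_abs)
qed

end
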